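(* Let $m,n\ge 2$ and let $W$ be a channel from $\{1,\dots,m\}$ to $\{1,\dots,n\}$. Let $\alpha_j=\min_{1\le i\le m}W_{i,j}$ for $1\le j\le n$. Then $\overline{P}_W(1)=\sum_{j=1}^n\alpha_j$, and \[ \underline{C}_{11}(W)\ge 1-\overline{P}_W(1). \] If $\overline{P}_W(1)=1$, then $\underline{C}_{11}(W)\le 0$. If $\overline{P}_W(1)<1$, define \[ W'=\frac{W-\sum_{j=1}^n\alpha_j\mathrm{U}_j}{1-\overline{P}_W(1)},\qquad a=\lfloor \mathbf{1}W'\rfloor\ (\text{entrywise}),\qquad \gamma=\Big(m+\mathrm{w}(a)-\sum_{j=1}^n a_j\Big)\wedge n; \] then $\underline{C}_{11}(W)\le (1-\overline{P}_W(1))\log_2\gamma$. Moreover, if $m=2$ or $n=2$, then $\underline{C}_{11}(W)=1-\overline{P}_W(1)$.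
   Context: A channel from $\mathcal{X}=\{1,\dots,m\}$ to $\mathcal{Y}=\{1,\dots,n\}$ is an $m\times n$ row-stochastic matrix $W=(W_{x,y})$. A deterministic channel is a channel whose entries are all $0$ or $1$; it is identified with the map $D:\mathcal{X}\to\mathcal{Y}$ with $D(x)=y$ iff $D_{x,y}=1$. $\mathcal{D}$ is the set of all deterministic channels, and $\mathrm{rank}(D)$ is the matrix rank (the number of nonzero columns). $\mathrm{U}_j$ denotes the deterministic channel whose $j$-th column is all ones. $\Lambda(W)=\{\lambda \text{ probability distribution on }\mathcal{D}: W=\sum_{D\in\mathcal{D}}\lambda_D D\}$. For $\lambda$ a probability distribution on $\mathcal{D}$, $C_{11}(\lambda)=\sum_D\lambda_D\log_2\mathrm{rank}(D)$, and $\underline{C}_{11}(W)=\inf\{C_{11}(\lambda):\lambda\in\Lambda(W)\}$. For $\lambda\in\Lambda(W)$, $P_\lambda(r)=\lambda(\{D\in\mathcal{D}:\mathrm{rank}(D)=r\})$ and $\overline{P}_W(r)=\max_{\lambda\in\Lambda(W)}P_\lambda(r)$. $\mathbf{1}$ is the all-one row vector of length $m$ (so $\mathbf{1}W$ is the vector of column sums). For a vector $a$, $\mathrm{w}(a)$ is the number of its nonzero entries; $x\wedge y=\min(x,y)$. *)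

theory Defs
  imports Complex_Main "HOL-Library.FuncSet"
begin

text \<open>Indices are 0-based: inputs {..<m}, outputs {..<n}.
A channel is W :: nat => nat => real, W x y the entry in row x, column y.\<close>

definition channel :: "nat \<Rightarrow> nat \<Rightarrow> (nat \<Rightarrow> nat \<Rightarrow> real) \<Rightarrow> bool" where
  "channel m n W \<longleftrightarrow> (\<forall>x<m. \<forall>y<n. W x y \<ge> 0) \<and> (\<forall>x<m. (\<Sum>y<n. W x y) = 1)"

definition det_channels :: "nat \<Rightarrow> nat \<Rightarrow> (nat \<Rightarrow> nat) set" where
  "det_channels m n = ({..<m} \<rightarrow>\<^sub>E {..<n})"

definition det_matrix :: "(nat \<Rightarrow> nat) \<Rightarrow> nat \<Rightarrow> nat \<Rightarrow> real" where
  "det_matrix D x y = (if D x = y then 1 else 0)"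

text \<open>Rank = number of nonzero columns = size of the image.\<close>
definition drank :: "nat \<Rightarrow> (nat \<Rightarrow> nat) \<Rightarrow> nat" where
  "drank m D = card (D ` {..<m})"

definition U_chan :: "nat \<Rightarrow> nat \<Rightarrow> nat \<Rightarrow> nat" where
  "U_chan m j = (\<lambda>x. if x < m then j else undefined)"

definition Lambda :: "nat \<Rightarrow> nat \<Rightarrow> (nat \<Rightarrow> nat \<Rightarrow> real) \<Rightarrow> ((nat \<Rightarrow> nat) \<Rightarrow> real) set" where
  "Lambda m n W = {lam.
     (\<forall>D. D \<notin> det_channels m n \<longrightarrow> lam D = 0) \<and>
     (\<forall>D\<in>det_channels m n. lam D \<ge> 0) \<and>
     (\<Sum>D\<in>det_channels m n. lam D) = 1 \<and>
     (\<forall>x<m. \<forall>y<n. W x y = (\<Sum>D\<in>det_channels m n. lam D * det_matrix D x y))}"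

definition C11 :: "nat \<Rightarrow> nat \<Rightarrow> ((nat \<Rightarrow> nat) \<Rightarrow> real) \<Rightarrow> real" where
  "C11 m n lam = (\<Sum>D\<in>det_channels m n. lam D * log 2 (real (drank m D)))"

definition lower_C11 :: "nat \<Rightarrow> nat \<Rightarrow> (nat \<Rightarrow> nat \<Rightarrow> real) \<Rightarrow> real" where
  "lower_C11 m n W = Inf (C11 m n ` Lambda m n W)"

definition P_lam :: "nat \<Rightarrow> nat \<Rightarrow> ((nat \<Rightarrow> nat) \<Rightarrow> real) \<Rightarrow> nat \<Rightarrow> real" where
  "P_lam m n lam r = (\<Sum>D\<in>{D\<in>det_channels m n. drank m D = r}. lam D)"

text \<open>The paper's max; we use Sup (the theorem's value claim then fixes it).\<close>
definition upper_P :: "nat \<Rightarrow> nat \<Rightarrow> (nat \<Rightarrow> nat \<Rightarrow> real) \<Rightarrow> nat \<Rightarrow> real" where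
  "upper_P m n W r = Sup ((\<lambda>lam. P_lam m n lam r) ` Lambda m n W)"

end

theory Submission
  imports Defs
begin

text \<open>A rank-one deterministic channel is a constant map \<open>U\<^sub>j\<close>, and its weight in any
  decomposition of \<open>W\<close> is at most the column minimum \<open>\<alpha>\<^sub>j\<close>; conversely
  \<open>W - \<Sum>\<^sub>j \<alpha>\<^sub>j U\<^sub>j\<close> is \<open>1 - \<Sum>\<^sub>j \<alpha>\<^sub>j\<close> times a channel \<open>W'\<close>, so
  decomposing \<open>W'\<close> and adding the \<open>U\<^sub>j\<close> attains \<open>\<Sum>\<^sub>j \<alpha>\<^sub>j\<close>. The lower bound
  follows from \<open>log\<^sub>2 (rank D) \<ge> [rank D \<noteq> 1]\<close>, with equality when all ranks are at most 2.
  For the upper bound, \<open>W'\<close> is decomposed into deterministic channels in which every output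
  \<open>j\<close> has at least \<open>a\<^sub>j\<close> preimages: the row-stochastic matrices whose column sums are at
  least the integers \<open>a\<^sub>j\<close> form a polytope with integral vertices, as a perturbation
  argument shows. Such a channel has rank at most \<open>m + w(a) - \<Sum>\<^sub>j a\<^sub>j\<close>.\<close>

section \<open>Finite sums and linear systems\<close>

lemma homogeneous_system_nontrivial_solution:
  fixes a :: "'i \<Rightarrow> 'v \<Rightarrow> real"
  assumes "finite I" "finite V" "card I < card V"
  shows "\<exists>e. (\<exists>v\<in>V. e v \<noteq> 0) \<and> (\<forall>i\<in>I. (\<Sum>v\<in>V. a i v * e v) = 0)"
  using assms
proof (induction I arbitrary: V a rule: finite_induct)
  case empty
  then obtain v where "v \<in> V" by fastforce
  then show ?case by (intro exI[of _ "\<lambda>_. 1"]) auto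
next
  case (insert i I)
  show ?case
  proof (cases "\<forall>v\<in>V. a i v = 0")
    case True
    from insert.IH[OF insert.prems(1), of a] insert.prems insert.hyps
    obtain e where "\<exists>v\<in>V. e v \<noteq> 0" "\<forall>k\<in>I. (\<Sum>v\<in>V. a k v * e v) = 0" by auto
    with True show ?thesis by auto
  next
    case False
    then obtain v0 where v0: "v0 \<in> V" "a i v0 \<noteq> 0" by auto
    define V' where "V' = V - {v0}"
    \<comment> \<open>Eliminate the unknown at \<open>v0\<close> from the remaining equations using equation \<open>i\<close>.\<close>
    define a' where "a' = (\<lambda>k v. a k v - a k v0 * a i v / a i v0)"
    have "finite V'" "card I < card V'"
      using insert v0 by (auto simp: V'_def)
    from insert.IH[OF this, of a'] obtain e where
      e: "\<exists>v\<in>V'. e v \<noteq> 0" "\<forall>k\<in>I. (\<Sum>v\<in>V'. a' k v * e v) = 0" by blast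
    define x0 where "x0 = - (\<Sum>w\<in>V'. a i w * e w) / a i v0"
    define e' where "e' = e(v0 := x0)"
    have split: "(\<Sum>v\<in>V. f v * e' v) = f v0 * x0 + (\<Sum>v\<in>V'. f v * e v)" for f
    proof -
      have "(\<Sum>v\<in>V. f v * e' v) = f v0 * e' v0 + (\<Sum>v\<in>V'. f v * e' v)"
        using v0 insert.prems(1) by (simp add: V'_def sum.remove)
      also have "(\<Sum>v\<in>V'. f v * e' v) = (\<Sum>v\<in>V'. f v * e v)"
        by (rule sum.cong) (auto simp: e'_def V'_def)
      finally show ?thesis by (simp add: e'_def)
    qed
    have "(\<Sum>v\<in>V. a k v * e' v) = 0" if "k \<in> I" for k
    proof -
      have "0 = (\<Sum>v\<in>V'. a k v * e v) - a k v0 / a i v0 * (\<Sum>v\<in>V'. a i v * e v)"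
        using e(2) that unfolding a'_def by (simp add: sum_subtractf sum_distrib_left algebra_simps)
      also have "\<dots> = (\<Sum>v\<in>V'. a k v * e v) + a k v0 * x0"
        unfolding x0_def by (simp add: field_simps)
      finally show ?thesis unfolding split by simp
    qed
    moreover have "(\<Sum>v\<in>V. a i v * e' v) = 0"
      unfolding split x0_def using v0 by simp
    moreover have "\<exists>v\<in>V. e' v \<noteq> 0"
      using e(1) by (auto simp: V'_def e'_def)
    ultimately show ?thesis by auto
  qed
qed

lemma card_eq_sum_card_fibres:
  assumes "finite V"
  shows "card V = (\<Sum>x\<in>fst ` V. card {y. (x, y) \<in> V})"
proof -
  have "finite {y. (x, y) \<in> V}" for x
    by (rule finite_subset[of _ "snd ` V"]) (use assms in \<open>force+\<close>)
  moreover have "card V = card (Sigma (fst ` V) (\<lambda>x. {y. (x, y) \<in> V}))"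
    by (rule arg_cong[of _ _ card]) force
  ultimately show ?thesis using assms by simp
qed

lemma card_eq_sum_card_fibres_snd:
  assumes "finite V"
  shows "card V = (\<Sum>y\<in>snd ` V. card {x. (x, y) \<in> V})"
proof -
  have "card V = card (prod.swap ` V)" by (simp add: card_image)
  also have "\<dots> = (\<Sum>y\<in>fst ` prod.swap ` V. card {x. (y, x) \<in> prod.swap ` V})"
    using assms by (intro card_eq_sum_card_fibres) simp
  also have "\<dots> = (\<Sum>y\<in>snd ` V. card {x. (x, y) \<in> V})"
    by (simp add: image_image)
  finally show ?thesis .
qed

lemma sum_of_pairs_fst:
  fixes V :: "(nat \<times> nat) set" and e :: "nat \<times> nat \<Rightarrow> real"
  assumes "V \<subseteq> {..<m} \<times> {..<n}"
  shows "(\<Sum>v\<in>V. of_bool (fst v = x) * e v) = (\<Sum>j<n. if (x, j) \<in> V then e (x, j) else 0)"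
proof -
  have fin: "finite V" using assms by (rule finite_subset) auto
  have "(\<Sum>v\<in>V. of_bool (fst v = x) * e v) = (\<Sum>v\<in>V. if fst v = x then e v else 0)"
    by (rule sum.cong) auto
  also have "\<dots> = (\<Sum>v\<in>{v\<in>V. fst v = x}. e v)"
    by (rule sum.inter_filter[OF fin, symmetric])
  also have "\<dots> = (\<Sum>j\<in>{j\<in>{..<n}. (x, j) \<in> V}. e (x, j))"
  proof (rule sum.reindex_cong[of "Pair x"])
    show "{v\<in>V. fst v = x} = Pair x ` {j\<in>{..<n}. (x, j) \<in> V}"
      using assms by force
  qed (auto simp: inj_on_def)
  also have "\<dots> = (\<Sum>j<n. if (x, j) \<in> V then e (x, j) else 0)"
    by (rule sum.inter_filter) simp
  finally show ?thesis .
qed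

lemma sum_of_pairs_snd:
  fixes V :: "(nat \<times> nat) set" and e :: "nat \<times> nat \<Rightarrow> real"
  assumes "V \<subseteq> {..<m} \<times> {..<n}"
  shows "(\<Sum>v\<in>V. of_bool (snd v = j) * e v) = (\<Sum>x<m. if (x, j) \<in> V then e (x, j) else 0)"
proof -
  have fin: "finite V" using assms by (rule finite_subset) auto
  have "(\<Sum>v\<in>V. of_bool (snd v = j) * e v) = (\<Sum>v\<in>V. if snd v = j then e v else 0)"
    by (rule sum.cong) auto
  also have "\<dots> = (\<Sum>v\<in>{v\<in>V. snd v = j}. e v)"
    by (rule sum.inter_filter[OF fin, symmetric])
  also have "\<dots> = (\<Sum>x\<in>{x\<in>{..<m}. (x, j) \<in> V}. e (x, j))"
  proof (rule sum.reindex_cong[of "\<lambda>x. (x, j)"])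
    show "{v\<in>V. snd v = j} = (\<lambda>x. (x, j)) ` {x\<in>{..<m}. (x, j) \<in> V}"
      using assms by force
  qed (auto simp: inj_on_def)
  also have "\<dots> = (\<Sum>x<m. if (x, j) \<in> V then e (x, j) else 0)"
    by (rule sum.inter_filter) simp
  finally show ?thesis .
qed

lemma col_sum_zero_if_others_zero:
  fixes E :: "nat \<Rightarrow> nat \<Rightarrow> real"
  assumes "\<forall>x<m. (\<Sum>j<n. E x j) = 0" "\<forall>j<n. j \<noteq> j0 \<longrightarrow> (\<Sum>x<m. E x j) = 0" "j0 < n"
  shows "(\<Sum>x<m. E x j0) = 0"
proof -
  have "(\<Sum>j<n. \<Sum>x<m. E x j) = (\<Sum>x<m. \<Sum>j<n. E x j)" by (rule sum.swap)
  also have "\<dots> = 0" using assms(1) by simp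
  also have "(\<Sum>j<n. \<Sum>x<m. E x j) = (\<Sum>x<m. E x j0) + (\<Sum>j\<in>{..<n} - {j0}. \<Sum>x<m. E x j)"
    using assms(3) by (simp add: sum.remove)
  also have "(\<Sum>j\<in>{..<n} - {j0}. \<Sum>x<m. E x j) = 0"
    using assms(2) by (intro sum.neutral) auto
  finally show ?thesis by simp
qed

lemma two_fractional_terms:
  fixes f :: "'a \<Rightarrow> real"
  assumes "finite A" "sum f A \<in> \<int>" "\<forall>a\<in>A. 0 \<le> f a \<and> f a \<le> 1"
    and "a0 \<in> A" "0 < f a0" "f a0 < 1"
  shows "2 \<le> card {a\<in>A. 0 < f a \<and> f a < 1}"
proof (rule ccontr)
  define S where "S = {a\<in>A. 0 < f a \<and> f a < 1}"
  assume "\<not> 2 \<le> card {a\<in>A. 0 < f a \<and> f a < 1}"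
  then have small: "card S < 2" by (simp add: S_def)
  have only: "S = {a0}"
  proof (rule ccontr)
    assume "S \<noteq> {a0}"
    moreover have "a0 \<in> S" using assms by (simp add: S_def)
    ultimately obtain b where "b \<in> S" "b \<noteq> a0" by blast
    with \<open>a0 \<in> S\<close> have "card {a0, b} \<le> card S"
      by (intro card_mono) (auto simp: S_def assms(1))
    with small \<open>b \<noteq> a0\<close> show False by simp
  qed
  have "f a \<in> \<int>" if "a \<in> A - {a0}" for a
  proof -
    have "a \<notin> S" using only that by blast
    then have "f a = 0 \<or> f a = 1" using that assms(3) by (auto simp: S_def)
    then show ?thesis by auto
  qed
  then have "sum f (A - {a0}) \<in> \<int>" by (intro Ints_sum) auto
  moreover have "sum f A = f a0 + sum f (A - {a0})"
    using assms(1,4) by (simp add: sum.remove)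
  ultimately have "f a0 \<in> \<int>" using assms(2) by (metis Ints_diff add_diff_cancel_right')
  then obtain k where "f a0 = of_int k" by (elim Ints_cases)
  then show False using assms(5,6) by simp
qed

lemma exists_tight_ratio:
  fixes p q :: "'a \<Rightarrow> real"
  assumes "finite A" "A \<noteq> {}" "\<forall>a\<in>A. 0 < p a \<and> 0 < q a"
  shows "\<exists>t>0. (\<forall>a\<in>A. t * q a \<le> p a) \<and> (\<exists>a\<in>A. t * q a = p a)"
proof -
  define t where "t = Min ((\<lambda>a. p a / q a) ` A)"
  have "t \<in> (\<lambda>a. p a / q a) ` A" unfolding t_def using assms(1,2) by (intro Min_in) auto
  then obtain a0 where a0: "a0 \<in> A" "t = p a0 / q a0" by blast
  have "t * q a \<le> p a" if "a \<in> A" for a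
  proof -
    have "t \<le> p a / q a" unfolding t_def using assms(1) that by simp
    then show ?thesis using assms(3) that by (simp add: pos_le_divide_eq)
  qed
  moreover have "t > 0" "t * q a0 = p a0" using a0 assms(3) by auto
  ultimately show ?thesis using a0(1) by blast
qed

lemma exists_neg_if_sum_zero:
  fixes f :: "'a \<Rightarrow> real"
  assumes "finite A" "sum f A = 0" "a \<in> A" "f a \<noteq> 0"
  shows "\<exists>b\<in>A. f b < 0"
proof (rule ccontr)
  assume "\<not> ?thesis"
  then have "\<forall>b\<in>A. 0 \<le> f b" by (simp add: not_less)
  with assms(1,2) have "\<forall>b\<in>A. f b = 0" by (simp add: sum_nonneg_eq_0_iff)
  with assms(3,4) show False by blast
qed

section \<open>Fractional entries of column-bounded channels\<close>

definition col_bounded :: "nat \<Rightarrow> nat \<Rightarrow> (nat \<Rightarrow> int) \<Rightarrow> (nat \<Rightarrow> nat \<Rightarrow> real) \<Rightarrow> bool" where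
  "col_bounded m n l X \<longleftrightarrow> channel m n X \<and> (\<forall>j<n. of_int (l j) \<le> (\<Sum>x<m. X x j))"

definition fractional_entries :: "nat \<Rightarrow> nat \<Rightarrow> (nat \<Rightarrow> nat \<Rightarrow> real) \<Rightarrow> (nat \<times> nat) set" where
  "fractional_entries m n X = {(x, j). x < m \<and> j < n \<and> 0 < X x j \<and> X x j < 1}"

definition fractional_columns :: "nat \<Rightarrow> nat \<Rightarrow> (nat \<Rightarrow> nat \<Rightarrow> real) \<Rightarrow> nat set" where
  "fractional_columns m n X = {j. j < n \<and> (\<Sum>x<m. X x j) \<notin> \<int>}"

definition fractionality :: "nat \<Rightarrow> nat \<Rightarrow> (nat \<Rightarrow> nat \<Rightarrow> real) \<Rightarrow> nat" where
  "fractionality m n X = card (fractional_entries m n X) + card (fractional_columns m n X)"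

definition admissible_direction :: "nat \<Rightarrow> nat \<Rightarrow> (nat \<Rightarrow> nat \<Rightarrow> real) \<Rightarrow> (nat \<Rightarrow> nat \<Rightarrow> real) \<Rightarrow> bool" where
  "admissible_direction m n X E \<longleftrightarrow>
     (\<forall>x j. (x, j) \<notin> fractional_entries m n X \<longrightarrow> E x j = 0) \<and>
     (\<forall>x<m. (\<Sum>j<n. E x j) = 0) \<and>
     (\<forall>j<n. (\<Sum>x<m. X x j) \<in> \<int> \<longrightarrow> (\<Sum>x<m. E x j) = 0)"

lemma fractional_entries_subset: "fractional_entries m n X \<subseteq> {..<m} \<times> {..<n}"
  by (auto simp: fractional_entries_def)

lemma finite_fractional_entries [simp]: "finite (fractional_entries m n X)"
  by (rule finite_subset[OF fractional_entries_subset]) auto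

lemma finite_fractional_columns [simp]: "finite (fractional_columns m n X)"
  by (rule finite_subset[of _ "{..<n}"]) (auto simp: fractional_columns_def)

lemma admissible_direction_uminus:
  "admissible_direction m n X E \<Longrightarrow> admissible_direction m n X (\<lambda>x y. - E x y)"
  by (simp add: admissible_direction_def sum_negf)

lemma fractional_entries_perturb_subset:
  assumes "admissible_direction m n X E"
  shows "fractional_entries m n (\<lambda>x y. X x y + t * E x y) \<subseteq> fractional_entries m n X"
proof
  fix v assume v: "v \<in> fractional_entries m n (\<lambda>x y. X x y + t * E x y)"
  obtain x j where [simp]: "v = (x, j)" by (cases v)
  show "v \<in> fractional_entries m n X"
  proof (rule ccontr)
    assume "v \<notin> fractional_entries m n X"
    then have "E x j = 0" using assms by (simp add: admissible_direction_def)
    with v \<open>v \<notin> fractional_entries m n X\<close> show False by (simp add: fractional_entries_def)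
  qed
qed

lemma fractional_columns_perturb_subset:
  assumes "admissible_direction m n X E"
  shows "fractional_columns m n (\<lambda>x y. X x y + t * E x y) \<subseteq> fractional_columns m n X"
  using assms
  by (auto simp: admissible_direction_def fractional_columns_def sum.distrib
      simp flip: sum_distrib_left)

lemma col_bounded_perturb:
  assumes X: "col_bounded m n l X" and E: "admissible_direction m n X E" and "0 \<le> t"
    and entries: "\<forall>x<m. \<forall>y<n. t * - E x y \<le> X x y"
    and cols: "\<forall>j\<in>fractional_columns m n X. t * - (\<Sum>x<m. E x j) \<le> frac (\<Sum>x<m. X x j)"
  shows "col_bounded m n l (\<lambda>x y. X x y + t * E x y)"
  unfolding col_bounded_def channel_def
proof (intro conjI allI impI)
  fix x y assume "x < m" "y < n"
  then show "0 \<le> X x y + t * E x y" using entries by force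
next
  fix x assume "x < m"
  then show "(\<Sum>y<n. X x y + t * E x y) = 1"
    using X E by (simp add: col_bounded_def channel_def admissible_direction_def sum.distrib
        flip: sum_distrib_left)
next
  fix j assume "j < n"
  define c where "c = (\<Sum>x<m. X x j)"
  define s where "s = (\<Sum>x<m. E x j)"
  have col: "(\<Sum>x<m. X x j + t * E x j) = c + t * s"
    by (simp add: c_def s_def sum.distrib sum_distrib_left)
  have l_le: "of_int (l j) \<le> c" using X \<open>j < n\<close> by (simp add: col_bounded_def c_def)
  consider "c \<in> \<int>" | "c \<notin> \<int>" "s < 0" | "0 \<le> s" by linarith
  then show "of_int (l j) \<le> (\<Sum>x<m. X x j + t * E x j)"
  proof cases
    case 1
    then have "s = 0" using E \<open>j < n\<close> by (simp add: admissible_direction_def c_def s_def)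
    then show ?thesis using l_le col by simp
  next
    case 2
    then have "t * - s \<le> c - of_int \<lfloor>c\<rfloor>"
      using cols \<open>j < n\<close> by (simp add: fractional_columns_def c_def s_def frac_def)
    moreover have "real_of_int (l j) \<le> of_int \<lfloor>c\<rfloor>" using l_le by (simp add: le_floor_iff)
    ultimately show ?thesis using col by simp
  next
    case 3
    then show ?thesis using l_le col \<open>0 \<le> t\<close> by (simp add: add_increasing2)
  qed
qed

lemma fractionality_perturb_less:
  assumes E: "admissible_direction m n X E"
    and "(\<exists>v\<in>fractional_entries m n X. X (fst v) (snd v) + t * E (fst v) (snd v) = 0)
         \<or> (\<exists>j\<in>fractional_columns m n X. (\<Sum>x<m. X x j + t * E x j) \<in> \<int>)"
  shows "fractionality m n (\<lambda>x y. X x y + t * E x y) < fractionality m n X"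
  using assms(2)
proof
  assume "\<exists>v\<in>fractional_entries m n X. X (fst v) (snd v) + t * E (fst v) (snd v) = 0"
  then obtain v where v: "v \<in> fractional_entries m n X"
    "v \<notin> fractional_entries m n (\<lambda>x y. X x y + t * E x y)"
    by (auto simp: fractional_entries_def)
  then have "card (fractional_entries m n (\<lambda>x y. X x y + t * E x y)) < card (fractional_entries m n X)"
    using fractional_entries_perturb_subset[OF E] by (intro psubset_card_mono) auto
  moreover have "card (fractional_columns m n (\<lambda>x y. X x y + t * E x y)) \<le> card (fractional_columns m n X)"
    using fractional_columns_perturb_subset[OF E] by (simp add: card_mono)
  ultimately show ?thesis by (simp add: fractionality_def)
next
  assume "\<exists>j\<in>fractional_columns m n X. (\<Sum>x<m. X x j + t * E x j) \<in> \<int>"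
  then obtain j where j: "j \<in> fractional_columns m n X"
    "j \<notin> fractional_columns m n (\<lambda>x y. X x y + t * E x y)"
    by (auto simp: fractional_columns_def)
  then have "card (fractional_columns m n (\<lambda>x y. X x y + t * E x y)) < card (fractional_columns m n X)"
    using fractional_columns_perturb_subset[OF E] by (intro psubset_card_mono) auto
  moreover have "card (fractional_entries m n (\<lambda>x y. X x y + t * E x y)) \<le> card (fractional_entries m n X)"
    using fractional_entries_perturb_subset[OF E] by (simp add: card_mono)
  ultimately show ?thesis by (simp add: fractionality_def)
qed

text \<open>Move along the direction until a fractional entry hits \<open>0\<close> or a fractional column
  sum hits its floor, whichever comes first.\<close>

lemma perturbation_step:
  assumes X: "col_bounded m n l X" and E: "admissible_direction m n X E" and "E x0 j0 \<noteq> 0"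
  shows "\<exists>t>0. col_bounded m n l (\<lambda>x y. X x y + t * E x y)
           \<and> fractionality m n (\<lambda>x y. X x y + t * E x y) < fractionality m n X"
proof -
  define V where "V = fractional_entries m n X"
  define c where "c j = (\<Sum>x<m. X x j)" for j
  define s where "s j = (\<Sum>x<m. E x j)" for j
  have E_out: "E x j = 0" if "(x, j) \<notin> V" for x j
    using E that by (simp add: admissible_direction_def V_def)
  have "(x0, j0) \<in> V" using E_out \<open>E x0 j0 \<noteq> 0\<close> by blast
  then have "x0 < m" "j0 < n" by (auto simp: V_def fractional_entries_def)
  then obtain j1 where j1: "E x0 j1 < 0"
    using exists_neg_if_sum_zero[of "{..<n}" "E x0" j0] E \<open>E x0 j0 \<noteq> 0\<close>
    by (auto simp: admissible_direction_def)
  define N1 where "N1 = {v\<in>V. E (fst v) (snd v) < 0}"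
  define N2 where "N2 = {j\<in>fractional_columns m n X. s j < 0}"
  define p where "p = case_sum (\<lambda>v. X (fst v) (snd v)) (\<lambda>j. frac (c j))"
  define q where "q = case_sum (\<lambda>v. - E (fst v) (snd v)) (\<lambda>j. - s j)"
  have "finite (N1 <+> N2)" by (simp add: N1_def N2_def V_def)
  moreover have "Inl (x0, j1) \<in> N1 <+> N2" using E_out[of x0 j1] j1 by (auto simp: N1_def)
  then have "N1 <+> N2 \<noteq> {}" by blast
  moreover have "\<forall>a\<in>N1 <+> N2. 0 < p a \<and> 0 < q a"
    by (auto simp: p_def q_def N1_def N2_def V_def fractional_entries_def
        fractional_columns_def c_def frac_gt_0_iff)
  ultimately obtain t where t: "t > 0" and le: "\<forall>a\<in>N1 <+> N2. t * q a \<le> p a"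
    and tight: "\<exists>a\<in>N1 <+> N2. t * q a = p a"
    using exists_tight_ratio[of "N1 <+> N2" p q] by blast
  have "t * - E x y \<le> X x y" if "x < m" "y < n" for x y
  proof (cases "E x y < 0")
    case True
    then have "(x, y) \<in> N1" using E_out[of x y] by (auto simp: N1_def)
    from le[rule_format, OF InlI[OF this]] show ?thesis by (simp add: p_def q_def)
  next
    case False
    then have "0 \<le> t * E x y" using t by simp
    moreover have "0 \<le> X x y" using X that by (simp add: col_bounded_def channel_def)
    ultimately show ?thesis by simp
  qed
  moreover have "t * - s j \<le> frac (c j)" if "j \<in> fractional_columns m n X" for j
  proof (cases "s j < 0")
    case True
    then have "j \<in> N2" using that by (simp add: N2_def)
    from le[rule_format, OF InrI[OF this]] show ?thesis by (simp add: p_def q_def)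
  next
    case False
    then have "0 \<le> t * s j" using t by simp
    then show ?thesis using frac_ge_0[of "c j"] by linarith
  qed
  ultimately have "col_bounded m n l (\<lambda>x y. X x y + t * E x y)"
    using col_bounded_perturb[OF X E] t by (simp add: c_def s_def)
  moreover from tight have "fractionality m n (\<lambda>x y. X x y + t * E x y) < fractionality m n X"
  proof
    fix a assume "a \<in> N1 <+> N2" "t * q a = p a"
    then show ?thesis
    proof (cases a)
      case (Inl v)
      with \<open>t * q a = p a\<close> \<open>a \<in> N1 <+> N2\<close> show ?thesis
        by (intro fractionality_perturb_less[OF E] disjI1 bexI[of _ v])
          (auto simp: N1_def V_def p_def q_def)
    next
      case (Inr j)
      with \<open>t * q a = p a\<close> \<open>a \<in> N1 <+> N2\<close>
      have "j \<in> fractional_columns m n X" "(\<Sum>x<m. X x j + t * E x j) = of_int \<lfloor>c j\<rfloor>"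
        by (auto simp: N2_def p_def q_def frac_def c_def s_def sum.distrib sum_distrib_left)
      then show ?thesis by (intro fractionality_perturb_less[OF E] disjI2 bexI[of _ j]) auto
    qed
  qed
  ultimately show ?thesis using t by blast
qed

lemma channel_entry_le_1:
  assumes "channel m n X" "x < m" "y < n"
  shows "X x y \<le> 1"
proof -
  have "X x y \<le> (\<Sum>y<n. X x y)"
    using assms by (intro member_le_sum) (auto simp: channel_def)
  then show ?thesis using assms by (simp add: channel_def)
qed

lemma card_fractional_row_ge_2:
  assumes X: "channel m n X" and "(x, j0) \<in> fractional_entries m n X"
  shows "2 \<le> card {j. (x, j) \<in> fractional_entries m n X}"
proof -
  have "x < m" "j0 < n" "0 < X x j0" "X x j0 < 1"
    using assms(2) by (auto simp: fractional_entries_def)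
  then have "2 \<le> card {j\<in>{..<n}. 0 < X x j \<and> X x j < 1}"
    using X channel_entry_le_1[OF X \<open>x < m\<close>]
    by (intro two_fractional_terms[of _ _ j0]) (auto simp: channel_def)
  moreover have "{j. (x, j) \<in> fractional_entries m n X} = {j\<in>{..<n}. 0 < X x j \<and> X x j < 1}"
    using \<open>x < m\<close> by (auto simp: fractional_entries_def)
  ultimately show ?thesis by simp
qed

lemma card_fractional_col_ge_2:
  assumes X: "channel m n X" and "(x0, j) \<in> fractional_entries m n X" "(\<Sum>x<m. X x j) \<in> \<int>"
  shows "2 \<le> card {x. (x, j) \<in> fractional_entries m n X}"
proof -
  have "x0 < m" "j < n" "0 < X x0 j" "X x0 j < 1"
    using assms(2) by (auto simp: fractional_entries_def)
  then have "2 \<le> card {x\<in>{..<m}. 0 < X x j \<and> X x j < 1}"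
    using X channel_entry_le_1[OF X _ \<open>j < n\<close>] assms(3)
    by (intro two_fractional_terms[of _ _ x0]) (auto simp: channel_def)
  moreover have "{x. (x, j) \<in> fractional_entries m n X} = {x\<in>{..<m}. 0 < X x j \<and> X x j < 1}"
    using \<open>j < n\<close> by (auto simp: fractional_entries_def)
  ultimately show ?thesis by simp
qed

lemma card_rows_fractional_entries:
  assumes "channel m n X"
  shows "2 * card (fst ` fractional_entries m n X) \<le> card (fractional_entries m n X)"
proof -
  have "2 * card (fst ` fractional_entries m n X) = (\<Sum>x\<in>fst ` fractional_entries m n X. 2)" by simp
  also have "\<dots> \<le> (\<Sum>x\<in>fst ` fractional_entries m n X. card {j. (x, j) \<in> fractional_entries m n X})"
    using card_fractional_row_ge_2[OF assms] by (intro sum_mono) force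
  also have "\<dots> = card (fractional_entries m n X)" by (simp add: card_eq_sum_card_fibres)
  finally show ?thesis .
qed

lemma exists_direction_with_zero_sums:
  fixes V :: "(nat \<times> nat) set"
  assumes V: "V \<subseteq> {..<m} \<times> {..<n}" and "finite K" "card (fst ` V) + card K < card V"
  shows "\<exists>E :: nat \<Rightarrow> nat \<Rightarrow> real. (\<forall>x j. (x, j) \<notin> V \<longrightarrow> E x j = 0)
    \<and> (\<forall>x<m. (\<Sum>j<n. E x j) = 0) \<and> (\<forall>j\<in>K. (\<Sum>x<m. E x j) = 0) \<and> (\<exists>x j. E x j \<noteq> 0)"
proof -
  define a :: "nat + nat \<Rightarrow> nat \<times> nat \<Rightarrow> real"
    where "a = case_sum (\<lambda>x v. of_bool (fst v = x)) (\<lambda>j v. of_bool (snd v = j))"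
  have fin: "finite V" using V by (rule finite_subset) auto
  have "card (Inl ` fst ` V \<union> Inr ` K) = card (fst ` V) + card K"
    using fin \<open>finite K\<close> by (subst card_Un_disjoint) (auto simp: card_image)
  with assms(3) fin \<open>finite K\<close> obtain e where e: "\<exists>v\<in>V. e v \<noteq> 0"
    "\<forall>i\<in>Inl ` fst ` V \<union> Inr ` K. (\<Sum>v\<in>V. a i v * e v) = 0"
    using homogeneous_system_nontrivial_solution[of "Inl ` fst ` V \<union> Inr ` K" V a] by auto
  define E where "E x j = (if (x, j) \<in> V then e (x, j) else 0)" for x j
  have "(\<Sum>j<n. E x j) = 0" if "x < m" for x
  proof (cases "x \<in> fst ` V")
    case True
    then have "(\<Sum>v\<in>V. a (Inl x) v * e v) = 0" using e(2) by blast
    then show ?thesis using sum_of_pairs_fst[OF V, of x e] by (simp add: a_def E_def)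
  next
    case False
    then have "(x, j) \<notin> V" for j by force
    then show ?thesis by (simp add: E_def)
  qed
  moreover have "(\<Sum>x<m. E x j) = 0" if "j \<in> K" for j
  proof -
    have "(\<Sum>v\<in>V. a (Inr j) v * e v) = 0" using e(2) that by blast
    then show ?thesis using sum_of_pairs_snd[OF V, of j e] by (simp add: a_def E_def)
  qed
  moreover have "\<exists>x j. E x j \<noteq> 0" using e(1) by (force simp: E_def)
  moreover have "\<forall>x j. (x, j) \<notin> V \<longrightarrow> E x j = 0" by (simp add: E_def)
  ultimately show ?thesis by blast
qed

lemma admissible_direction_if_integral_cols_zero:
  assumes "\<forall>x j. (x, j) \<notin> fractional_entries m n X \<longrightarrow> E x j = 0" "\<forall>x<m. (\<Sum>j<n. E x j) = 0"
    and "\<forall>j\<in>snd ` fractional_entries m n X. (\<Sum>x<m. X x j) \<in> \<int> \<longrightarrow> (\<Sum>x<m. E x j) = 0"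
  shows "admissible_direction m n X E"
  unfolding admissible_direction_def
proof (intro conjI allI impI)
  fix j assume "j < n" "(\<Sum>x<m. X x j) \<in> \<int>"
  show "(\<Sum>x<m. E x j) = 0"
  proof (cases "j \<in> snd ` fractional_entries m n X")
    case False
    then have "(x, j) \<notin> fractional_entries m n X" for x by force
    then show ?thesis using assms(1) by simp
  qed (use assms(3) \<open>(\<Sum>x<m. X x j) \<in> \<int>\<close> in blast)
qed (use assms(1,2) in blast)+

text \<open>Each fractional entry has a second one in its row, and also in its column when the
  column sum is an integer, so the linear system ``row sums and integral column sums vanish''
  on the fractional entries has more unknowns than equations. If all these columns are
  integral, one column equation is implied by the others through the total sum.\<close>

lemma admissible_direction_exists:
  assumes X: "channel m n X" and ne: "fractional_entries m n X \<noteq> {}"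
  shows "\<exists>E. admissible_direction m n X E \<and> (\<exists>x j. E x j \<noteq> 0)"
proof -
  define V where "V = fractional_entries m n X"
  define C where "C = snd ` V"
  define K where "K = {j\<in>C. (\<Sum>x<m. X x j) \<in> \<int>}"
  have V_sub: "V \<subseteq> {..<m} \<times> {..<n}" by (simp add: V_def fractional_entries_subset)
  have fin: "finite V" "finite C" "finite K" by (simp_all add: V_def C_def K_def)
  have cols: "card V = (\<Sum>j\<in>C. card {x. (x, j) \<in> V})"
    using fin by (simp add: C_def card_eq_sum_card_fibres_snd)
  have col_2: "2 \<le> card {x. (x, j) \<in> V}" if jK: "j \<in> K" for j
  proof -
    obtain x0 where "(x0, j) \<in> V" "(\<Sum>x<m. X x j) \<in> \<int>" using jK by (auto simp: K_def C_def)
    then show ?thesis using card_fractional_col_ge_2[OF X] by (simp add: V_def)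
  qed
  have "2 * card K \<le> (\<Sum>j\<in>K. card {x. (x, j) \<in> V})"
    using col_2 sum_mono[of K "\<lambda>_. 2" "\<lambda>j. card {x. (x, j) \<in> V}"] by simp
  note rows = card_rows_fractional_entries[OF X, folded V_def]
  show ?thesis
  proof (cases "K = C")
    case False
    then obtain j1 where j1: "j1 \<in> C" "j1 \<notin> K" by (auto simp: K_def)
    obtain x1 where "(x1, j1) \<in> V" using j1(1) by (auto simp: C_def)
    moreover have "finite {x. (x, j1) \<in> V}"
      by (rule finite_subset[of _ "fst ` V"]) (use fin in \<open>force+\<close>)
    ultimately have "1 \<le> card {x. (x, j1) \<in> V}" by (auto simp: Suc_le_eq card_gt_0_iff)
    with \<open>2 * card K \<le> _\<close> have "2 * card K + 1 \<le> (\<Sum>j\<in>insert j1 K. card {x. (x, j) \<in> V})"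
      using fin j1 by simp
    also have "\<dots> \<le> card V"
      unfolding cols using j1 fin by (intro sum_mono2) (auto simp: K_def)
    finally have "card (fst ` V) + card K < card V" using rows by linarith
    then obtain E :: "nat \<Rightarrow> nat \<Rightarrow> real" where E: "\<forall>x j. (x, j) \<notin> V \<longrightarrow> E x j = 0"
      "\<forall>x<m. (\<Sum>j<n. E x j) = 0" "\<forall>j\<in>K. (\<Sum>x<m. E x j) = 0" "\<exists>x j. E x j \<noteq> 0"
      using exists_direction_with_zero_sums[OF V_sub fin(3)] by blast
    have "\<forall>j\<in>C. (\<Sum>x<m. X x j) \<in> \<int> \<longrightarrow> (\<Sum>x<m. E x j) = 0" using E(3) by (simp add: K_def)
    then have "admissible_direction m n X E"
      using E(1,2) by (intro admissible_direction_if_integral_cols_zero) (simp_all add: V_def C_def)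
    with E(4) show ?thesis by blast
  next
    case True
    obtain js where js: "js \<in> C" using ne by (auto simp: C_def V_def)
    have "2 * card C \<le> card V" using \<open>2 * card K \<le> _\<close> True cols by simp
    moreover have "card (C - {js}) = card C - 1" "1 \<le> card C"
      using js fin by (auto simp: Suc_le_eq card_gt_0_iff)
    ultimately have card_lt: "card (fst ` V) + card (C - {js}) < card V" using rows by linarith
    obtain E :: "nat \<Rightarrow> nat \<Rightarrow> real" where E: "\<forall>x j. (x, j) \<notin> V \<longrightarrow> E x j = 0"
      "\<forall>x<m. (\<Sum>j<n. E x j) = 0" "\<forall>j\<in>C - {js}. (\<Sum>x<m. E x j) = 0" "\<exists>x j. E x j \<noteq> 0"
      using exists_direction_with_zero_sums[OF V_sub _ card_lt] fin by blast
    have others: "\<forall>j<n. j \<noteq> js \<longrightarrow> (\<Sum>x<m. E x j) = 0"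
    proof (intro allI impI)
      fix j assume "j < n" "j \<noteq> js"
      show "(\<Sum>x<m. E x j) = 0"
      proof (cases "j \<in> C")
        case False
        then have "(x, j) \<notin> V" for x by (force simp: C_def)
        then show ?thesis using E(1) by simp
      qed (use E(3) \<open>j \<noteq> js\<close> in blast)
    qed
    have "js < n" using js V_sub by (auto simp: C_def)
    then have "(\<Sum>x<m. E x j) = 0" if "j < n" for j
      using others col_sum_zero_if_others_zero[OF E(2) others] that by (cases "j = js") auto
    then have "\<forall>j\<in>C. (\<Sum>x<m. X x j) \<in> \<int> \<longrightarrow> (\<Sum>x<m. E x j) = 0"
      using V_sub by (auto simp: C_def)
    then have "admissible_direction m n X E"
      using E(1,2) by (intro admissible_direction_if_integral_cols_zero) (simp_all add: V_def C_def)
    with E(4) show ?thesis by blast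
  qed
qed

section \<open>Decompositions respecting column counts\<close>

definition col_count :: "nat \<Rightarrow> (nat \<Rightarrow> nat) \<Rightarrow> nat \<Rightarrow> nat" where
  "col_count m D j = card {x\<in>{..<m}. D x = j}"

definition support_col_counts_ge ::
    "nat \<Rightarrow> nat \<Rightarrow> (nat \<Rightarrow> int) \<Rightarrow> ((nat \<Rightarrow> nat) \<Rightarrow> real) \<Rightarrow> bool" where
  "support_col_counts_ge m n l lam \<longleftrightarrow> (\<forall>D. 0 < lam D \<longrightarrow> (\<forall>j<n. l j \<le> int (col_count m D j)))"

lemma finite_det_channels [simp]: "finite (det_channels m n)"
  by (simp add: det_channels_def finite_PiE)

lemma sum_det_matrix_col: "(\<Sum>x<m. det_matrix D x j) = real (col_count m D j)"
  by (simp add: det_matrix_def col_count_def of_bool_def[symmetric] Int_def)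

lemma Lambda_nonneg: "lam \<in> Lambda m n W \<Longrightarrow> 0 \<le> lam D"
  by (cases "D \<in> det_channels m n") (auto simp: Lambda_def)

lemma Lambda_point_mass:
  assumes "D \<in> det_channels m n" "\<forall>x<m. \<forall>y<n. X x y = det_matrix D x y"
  shows "(\<lambda>D'. of_bool (D' = D)) \<in> Lambda m n X"
proof -
  have point: "(\<Sum>D'\<in>det_channels m n. of_bool (D' = D) * g D') = g D" for g :: "_ \<Rightarrow> real"
  proof -
    have "(\<Sum>D'\<in>det_channels m n. of_bool (D' = D) * g D')
        = (\<Sum>D'\<in>det_channels m n. if D' = D then g D' else 0)"
      by (rule sum.cong) auto
    also have "\<dots> = g D" using assms(1) by simp
    finally show ?thesis .
  qed
  show ?thesis
    using assms point[of "\<lambda>_. 1"] point[of "\<lambda>D. det_matrix D _ _"] by (auto simp: Lambda_def)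
qed

lemma integral_channel_deterministic:
  assumes X: "channel m n X" and "fractional_entries m n X = {}"
  shows "\<exists>D\<in>det_channels m n. \<forall>x<m. \<forall>y<n. X x y = det_matrix D x y"
proof -
  have zero_one: "X x y = 0 \<or> X x y = 1" if "x < m" "y < n" for x y
    using assms that channel_entry_le_1[OF X that]
    by (force simp: channel_def fractional_entries_def)
  have two_ones: "y = y'" if "x < m" "y < n" "y' < n" "X x y = 1" "X x y' = 1" for x y y'
  proof (rule ccontr)
    assume "y \<noteq> y'"
    then have "(\<Sum>z\<in>{y, y'}. X x z) \<le> (\<Sum>z<n. X x z)"
      using X that by (intro sum_mono2) (auto simp: channel_def)
    with \<open>y \<noteq> y'\<close> X that show False by (simp add: channel_def)
  qed
  have "\<exists>y\<in>{..<n}. X x y = 1" if "x \<in> {..<m}" for x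
  proof (rule ccontr)
    assume "\<not> ?thesis"
    then have "(\<Sum>y<n. X x y) = 0" using zero_one that by (intro sum.neutral) auto
    with X that show False by (simp add: channel_def)
  qed
  then obtain f where f: "\<forall>x\<in>{..<m}. f x \<in> {..<n} \<and> X x (f x) = 1" by metis
  define D where "D = restrict f {..<m}"
  have "D \<in> det_channels m n" using f by (simp add: D_def det_channels_def)
  moreover have "X x y = det_matrix D x y" if "x < m" "y < n" for x y
    using f that zero_one[OF that] two_ones[of x y "f x"]
    by (auto simp: D_def det_matrix_def)
  ultimately show ?thesis by blast
qed

lemma Lambda_convex_combination:
  assumes "lam1 \<in> Lambda m n X1" "lam2 \<in> Lambda m n X2" "0 \<le> \<theta>" "\<theta> \<le> 1"
    and "\<forall>x<m. \<forall>y<n. X x y = \<theta> * X1 x y + (1 - \<theta>) * X2 x y"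
  shows "(\<lambda>D. \<theta> * lam1 D + (1 - \<theta>) * lam2 D) \<in> Lambda m n X"
proof -
  have comb: "(\<Sum>D\<in>det_channels m n. (\<theta> * lam1 D + (1 - \<theta>) * lam2 D) * g D)
      = \<theta> * (\<Sum>D\<in>det_channels m n. lam1 D * g D) + (1 - \<theta>) * (\<Sum>D\<in>det_channels m n. lam2 D * g D)"
    for g :: "(nat \<Rightarrow> nat) \<Rightarrow> real"
  proof -
    have "(\<Sum>D\<in>det_channels m n. (\<theta> * lam1 D + (1 - \<theta>) * lam2 D) * g D)
        = (\<Sum>D\<in>det_channels m n. \<theta> * (lam1 D * g D) + (1 - \<theta>) * (lam2 D * g D))"
      by (rule sum.cong) (simp_all add: algebra_simps)
    then show ?thesis by (simp add: sum.distrib sum_distrib_left)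
  qed
  show ?thesis
    using assms comb[of "\<lambda>_. 1"] comb[of "\<lambda>D. det_matrix D _ _"] by (auto simp: Lambda_def)
qed

lemma support_col_counts_ge_convex_combination:
  assumes "lam1 \<in> Lambda m n X1" "lam2 \<in> Lambda m n X2" "0 \<le> \<theta>" "\<theta> \<le> 1"
    and "support_col_counts_ge m n l lam1" "support_col_counts_ge m n l lam2"
  shows "support_col_counts_ge m n l (\<lambda>D. \<theta> * lam1 D + (1 - \<theta>) * lam2 D)"
  unfolding support_col_counts_ge_def
proof (rule allI, rule impI)
  fix D assume pos: "0 < \<theta> * lam1 D + (1 - \<theta>) * lam2 D"
  have "0 \<le> lam1 D" "0 \<le> lam2 D" using Lambda_nonneg assms(1,2) by blast+
  then have "0 < lam1 D \<or> 0 < lam2 D"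
    using pos assms(3,4) by (metis add_0 less_eq_real_def mult_zero_right)
  then show "\<forall>j<n. l j \<le> int (col_count m D j)"
    using assms(5,6) by (auto simp: support_col_counts_ge_def)
qed

lemma col_bounded_decomposition_integral:
  assumes X: "col_bounded m n l X" and "fractional_entries m n X = {}"
  shows "\<exists>lam\<in>Lambda m n X. support_col_counts_ge m n l lam"
proof -
  have "channel m n X" using X by (simp add: col_bounded_def)
  then obtain D where D: "D \<in> det_channels m n" "\<forall>x<m. \<forall>y<n. X x y = det_matrix D x y"
    using integral_channel_deterministic[OF _ assms(2)] by blast
  have "l j \<le> int (col_count m D j)" if "j < n" for j
  proof -
    have "real_of_int (l j) \<le> (\<Sum>x<m. X x j)" using X that by (simp add: col_bounded_def)
    also have "\<dots> = real (col_count m D j)"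
      using D(2) that by (simp add: sum_det_matrix_col[symmetric])
    finally show ?thesis by linarith
  qed
  then have "support_col_counts_ge m n l (\<lambda>D'. of_bool (D' = D))"
    by (simp add: support_col_counts_ge_def)
  with Lambda_point_mass[OF D] show ?thesis by blast
qed

lemma col_bounded_decomposition:
  assumes "col_bounded m n l X"
  shows "\<exists>lam\<in>Lambda m n X. support_col_counts_ge m n l lam"
  using assms
proof (induction "fractionality m n X" arbitrary: X rule: less_induct)
  case less
  show ?case
  proof (cases "fractional_entries m n X = {}")
    case True
    then show ?thesis using col_bounded_decomposition_integral[OF less.prems] by blast
  next
    case False
    have "channel m n X" using less.prems by (simp add: col_bounded_def)
    then obtain E x0 j0 where E: "admissible_direction m n X E" and "E x0 j0 \<noteq> 0"
      using admissible_direction_exists[OF _ False] by blast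
    obtain t1 where t1: "t1 > 0" "col_bounded m n l (\<lambda>x y. X x y + t1 * E x y)"
      "fractionality m n (\<lambda>x y. X x y + t1 * E x y) < fractionality m n X"
      using perturbation_step[OF less.prems E \<open>E x0 j0 \<noteq> 0\<close>] by blast
    obtain t2 where t2: "t2 > 0" "col_bounded m n l (\<lambda>x y. X x y + t2 * - E x y)"
      "fractionality m n (\<lambda>x y. X x y + t2 * - E x y) < fractionality m n X"
      using perturbation_step[OF less.prems admissible_direction_uminus[OF E], of x0 j0]
        \<open>E x0 j0 \<noteq> 0\<close> by auto
    obtain lam1 where lam1: "lam1 \<in> Lambda m n (\<lambda>x y. X x y + t1 * E x y)"
      "support_col_counts_ge m n l lam1"
      using less.hyps[OF t1(3) t1(2)] by blast
    obtain lam2 where lam2: "lam2 \<in> Lambda m n (\<lambda>x y. X x y + t2 * - E x y)"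
      "support_col_counts_ge m n l lam2"
      using less.hyps[OF t2(3) t2(2)] by blast
    define \<theta> where "\<theta> = t2 / (t1 + t2)"
    have \<theta>: "0 \<le> \<theta>" "\<theta> \<le> 1" using t1 t2 by (auto simp: \<theta>_def)
    have "X x y = \<theta> * (X x y + t1 * E x y) + (1 - \<theta>) * (X x y + t2 * - E x y)" for x y
    proof -
      have "\<theta> * t1 - (1 - \<theta>) * t2 = 0" using t1 t2 by (simp add: \<theta>_def field_simps)
      moreover have "\<theta> * (X x y + t1 * E x y) + (1 - \<theta>) * (X x y + t2 * - E x y)
          = X x y + (\<theta> * t1 - (1 - \<theta>) * t2) * E x y"
        by (simp add: algebra_simps)
      ultimately show ?thesis by simp
    qed
    then show ?thesis
      using Lambda_convex_combination[OF lam1(1) lam2(1) \<theta>]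
        support_col_counts_ge_convex_combination[OF lam1(1) lam2(1) \<theta> lam1(2) lam2(2)]
      by blast
  qed
qed

section \<open>Ranks of deterministic channels\<close>

lemma sum_col_count_image: "(\<Sum>j\<in>D ` {..<m}. col_count m D j) = m"
proof -
  have "(\<Sum>j\<in>D ` {..<m}. col_count m D j) = (\<Sum>j\<in>D ` {..<m}. \<Sum>x\<in>{x\<in>{..<m}. D x = j}. 1)"
    by (simp add: col_count_def)
  also have "\<dots> = (\<Sum>x<m. 1)" by (rule sum.group) auto
  finally show ?thesis by simp
qed

text \<open>Outputs with \<open>a j > 0\<close> absorb at least \<open>a j\<close> inputs each, and every other output in
  the image absorbs at least one.\<close>

lemma drank_le_of_col_counts:
  fixes a :: "nat \<Rightarrow> int"
  assumes a: "\<forall>j<n. 0 \<le> a j \<and> a j \<le> int (col_count m D j)"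
  shows "int (drank m D) \<le> int m + int (card {j\<in>{..<n}. a j \<noteq> 0}) - (\<Sum>j<n. a j)"
proof -
  define A where "A = {j\<in>{..<n}. a j \<noteq> 0}"
  define I where "I = D ` {..<m}"
  have fin: "finite I" "finite A" by (simp_all add: I_def A_def)
  have A_sub: "A \<subseteq> I"
  proof
    fix j assume "j \<in> A"
    then have "0 < col_count m D j" using a by (force simp: A_def)
    then show "j \<in> I" by (auto simp: col_count_def I_def card_gt_0_iff)
  qed
  have "m = (\<Sum>j\<in>A. col_count m D j) + (\<Sum>j\<in>I - A. col_count m D j)"
    using sum_col_count_image[of m D] sum.subset_diff[OF A_sub fin(1), of "col_count m D"]
    by (simp add: I_def add.commute)
  then have "int m = (\<Sum>j\<in>A. int (col_count m D j)) + (\<Sum>j\<in>I - A. int (col_count m D j))"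
    by (metis of_nat_add of_nat_sum)
  moreover have "(\<Sum>j<n. a j) \<le> (\<Sum>j\<in>A. int (col_count m D j))"
  proof -
    have "(\<Sum>j<n. a j) = (\<Sum>j\<in>A. a j)" by (rule sum.mono_neutral_right) (auto simp: A_def)
    also have "\<dots> \<le> (\<Sum>j\<in>A. int (col_count m D j))" using a by (intro sum_mono) (auto simp: A_def)
    finally show ?thesis .
  qed
  moreover have "int (card I) - int (card A) \<le> (\<Sum>j\<in>I - A. int (col_count m D j))"
  proof -
    have "1 \<le> col_count m D j" if "j \<in> I" for j
      using that by (auto simp: I_def col_count_def Suc_le_eq card_gt_0_iff)
    then have "(\<Sum>j\<in>I - A. 1) \<le> (\<Sum>j\<in>I - A. int (col_count m D j))" by (intro sum_mono) auto
    then show ?thesis using fin A_sub by (simp add: card_Diff_subset of_nat_diff card_mono)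
  qed
  ultimately show ?thesis by (simp add: drank_def I_def A_def)
qed

lemma U_chan_in_det_channels: "j < n \<Longrightarrow> U_chan m j \<in> det_channels m n"
  by (auto simp: U_chan_def det_channels_def PiE_def extensional_def)

lemma det_matrix_U_chan: "x < m \<Longrightarrow> det_matrix (U_chan m j) x y = of_bool (j = y)"
  by (simp add: det_matrix_def U_chan_def)

lemma U_chan_eq_iff:
  assumes "0 < m"
  shows "U_chan m j = U_chan m j' \<longleftrightarrow> j = j'"
proof
  assume "U_chan m j = U_chan m j'"
  then have "U_chan m j 0 = U_chan m j' 0" by simp
  with assms show "j = j'" by (simp add: U_chan_def)
qed simp

lemma drank_U_chan: "0 < m \<Longrightarrow> drank m (U_chan m j) = 1"
proof -
  assume "0 < m"
  then have "U_chan m j ` {..<m} = {j}" by (auto simp: U_chan_def)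
  then show ?thesis by (simp add: drank_def)
qed

lemma drank_pos: "0 < m \<Longrightarrow> 0 < drank m D"
  by (auto simp: drank_def card_gt_0_iff)

lemma drank_le_n:
  assumes "D \<in> det_channels m n"
  shows "drank m D \<le> n"
proof -
  have "D ` {..<m} \<subseteq> {..<n}" using assms by (auto simp: det_channels_def)
  from card_mono[OF finite_lessThan this] show ?thesis by (simp add: drank_def)
qed

lemma drank_le_m: "drank m D \<le> m"
  using card_image_le[OF finite_lessThan, of D m] by (simp add: drank_def)

lemma drank_eq_1_iff:
  assumes "0 < m" "D \<in> det_channels m n"
  shows "drank m D = 1 \<longleftrightarrow> (\<exists>j<n. D = U_chan m j)"
proof
  assume "drank m D = 1"
  then obtain j where j: "D ` {..<m} = {j}" by (auto simp: drank_def card_1_singleton_iff)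
  then have "j < n" using assms by (force simp: det_channels_def)
  moreover have "D = U_chan m j"
  proof
    fix x show "D x = U_chan m j x"
      using j assms(2) by (cases "x < m") (auto simp: U_chan_def det_channels_def PiE_def extensional_def)
  qed
  ultimately show "\<exists>j<n. D = U_chan m j" by blast
next
  assume "\<exists>j<n. D = U_chan m j"
  then show "drank m D = 1" using drank_U_chan assms by auto
qed

section \<open>The quantities \<open>P\<^sub>\<lambda>(1)\<close> and \<open>C\<^sub>1\<^sub>1(\<lambda>)\<close>\<close>

lemma Lambda_le_entry:
  assumes "lam \<in> Lambda m n W" "D \<in> det_channels m n" "x < m"
  shows "lam D \<le> W x (D x)"
proof -
  have "D x < n" using assms(2,3) by (auto simp: det_channels_def)
  have "lam D * det_matrix D x (D x) \<le> (\<Sum>D'\<in>det_channels m n. lam D' * det_matrix D' x (D x))"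
    using assms Lambda_nonneg by (intro member_le_sum) (auto simp: det_matrix_def)
  then show ?thesis using assms \<open>D x < n\<close> by (simp add: Lambda_def det_matrix_def)
qed

lemma P_lam_1_eq:
  assumes "0 < m"
  shows "P_lam m n lam 1 = (\<Sum>j<n. lam (U_chan m j))"
proof -
  have "{D\<in>det_channels m n. drank m D = 1} = U_chan m ` {..<n}"
  proof (intro equalityI subsetI)
    fix D assume "D \<in> {D\<in>det_channels m n. drank m D = 1}"
    then show "D \<in> U_chan m ` {..<n}" using drank_eq_1_iff[OF assms, of D n] by auto
  next
    fix D assume "D \<in> U_chan m ` {..<n}"
    then show "D \<in> {D\<in>det_channels m n. drank m D = 1}"
      using assms U_chan_in_det_channels drank_U_chan by auto
  qed
  moreover have "inj_on (U_chan m) {..<n}" using U_chan_eq_iff[OF assms] by (simp add: inj_on_def)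
  ultimately show ?thesis by (simp add: P_lam_def sum.reindex)
qed

definition col_min :: "nat \<Rightarrow> (nat \<Rightarrow> nat \<Rightarrow> real) \<Rightarrow> nat \<Rightarrow> real" where
  "col_min m W j = Min ((\<lambda>i. W i j) ` {..<m})"

lemma col_min_le: "x < m \<Longrightarrow> col_min m W j \<le> W x j"
  by (auto simp: col_min_def)

lemma col_min_attained:
  assumes "0 < m"
  obtains x where "x < m" "W x j = col_min m W j"
proof -
  have "col_min m W j \<in> (\<lambda>i. W i j) ` {..<m}"
    unfolding col_min_def using assms by (intro Min_in) auto
  then obtain x where "x < m" "col_min m W j = W x j" by auto
  with that show ?thesis by simp
qed

lemma col_min_nonneg:
  assumes "channel m n W" "0 < m" "j < n"
  shows "0 \<le> col_min m W j"
proof -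
  obtain x where "x < m" "W x j = col_min m W j" using col_min_attained[OF assms(2)] .
  moreover have "0 \<le> W x j" using assms(1,3) \<open>x < m\<close> by (simp add: channel_def)
  ultimately show ?thesis by simp
qed

lemma sum_col_min_le_1:
  assumes "channel m n W" "0 < m"
  shows "(\<Sum>j<n. col_min m W j) \<le> 1"
proof -
  have "(\<Sum>j<n. col_min m W j) \<le> (\<Sum>j<n. W 0 j)" using assms(2) by (intro sum_mono col_min_le)
  then show ?thesis using assms by (simp add: channel_def)
qed

lemma P_lam_1_le_sum_col_min:
  assumes "lam \<in> Lambda m n W" "0 < m"
  shows "P_lam m n lam 1 \<le> (\<Sum>j<n. col_min m W j)"
proof -
  have "lam (U_chan m j) \<le> col_min m W j" if "j < n" for j
  proof -
    obtain x where "x < m" "W x j = col_min m W j" using col_min_attained[OF assms(2)] .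
    moreover have "lam (U_chan m j) \<le> W x (U_chan m j x)"
      using Lambda_le_entry[OF assms(1) U_chan_in_det_channels[OF that] \<open>x < m\<close>] .
    ultimately show ?thesis by (simp add: U_chan_def)
  qed
  then show ?thesis unfolding P_lam_1_eq[OF assms(2)] by (intro sum_mono) simp
qed

lemma one_minus_P_lam_1:
  assumes "lam \<in> Lambda m n W"
  shows "1 - P_lam m n lam 1 = (\<Sum>D\<in>det_channels m n. lam D * of_bool (drank m D \<noteq> 1))"
proof -
  have "P_lam m n lam 1 = (\<Sum>D\<in>det_channels m n. if drank m D = 1 then lam D else 0)"
    by (simp add: P_lam_def sum.inter_filter)
  also have "\<dots> = (\<Sum>D\<in>det_channels m n. lam D * of_bool (drank m D = 1))"
    by (rule sum.cong) auto
  finally have "P_lam m n lam 1 = (\<Sum>D\<in>det_channels m n. lam D * of_bool (drank m D = 1))" .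
  moreover have "(\<Sum>D\<in>det_channels m n. lam D * of_bool (drank m D \<noteq> 1))
      = (\<Sum>D\<in>det_channels m n. lam D) - (\<Sum>D\<in>det_channels m n. lam D * of_bool (drank m D = 1))"
    unfolding sum_subtractf[symmetric] by (rule sum.cong) auto
  moreover have "(\<Sum>D\<in>det_channels m n. lam D) = 1" using assms by (simp add: Lambda_def)
  ultimately show ?thesis by simp
qed

lemma C11_ge_one_minus_P_lam_1:
  assumes "lam \<in> Lambda m n W" "0 < m"
  shows "1 - P_lam m n lam 1 \<le> C11 m n lam"
  unfolding one_minus_P_lam_1[OF assms(1)] C11_def
proof (rule sum_mono)
  fix D
  have "of_bool (drank m D \<noteq> 1) \<le> log 2 (real (drank m D))"
    using drank_pos[OF assms(2), of D] by (cases "drank m D = 1") auto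
  then show "lam D * of_bool (drank m D \<noteq> 1) \<le> lam D * log 2 (real (drank m D))"
    using Lambda_nonneg[OF assms(1)] by (rule mult_left_mono)
qed

lemma C11_eq_one_minus_P_lam_1:
  assumes "lam \<in> Lambda m n W" "0 < m" "m \<le> 2 \<or> n \<le> 2"
  shows "C11 m n lam = 1 - P_lam m n lam 1"
  unfolding one_minus_P_lam_1[OF assms(1)] C11_def
proof (rule sum.cong)
  fix D assume "D \<in> det_channels m n"
  then have "drank m D \<le> 2" using drank_le_n[of D m n] drank_le_m[of m D] assms(3) by linarith
  then have "drank m D = 1 \<or> drank m D = 2" using drank_pos[OF assms(2), of D] by presburger
  then show "lam D * log 2 (real (drank m D)) = lam D * of_bool (drank m D \<noteq> 1)" by auto
qed simp

lemma C11_le_log_of_drank_le: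
  assumes "lam \<in> Lambda m n W" "0 < m" "\<forall>D. 0 < lam D \<longrightarrow> real (drank m D) \<le> r"
  shows "C11 m n lam \<le> log 2 r"
proof -
  have "C11 m n lam \<le> (\<Sum>D\<in>det_channels m n. lam D * log 2 r)"
    unfolding C11_def
  proof (rule sum_mono)
    fix D
    show "lam D * log 2 (real (drank m D)) \<le> lam D * log 2 r"
    proof (cases "0 < lam D")
      case True
      then have "log 2 (real (drank m D)) \<le> log 2 r"
        using assms(3) drank_pos[OF assms(2), of D] by (intro log_mono) auto
      then show ?thesis using True by simp
    next
      case False
      then show ?thesis using Lambda_nonneg[OF assms(1), of D] by simp
    qed
  qed
  also have "\<dots> = log 2 r" using assms(1) by (simp add: Lambda_def flip: sum_distrib_right)
  finally show ?thesis .
qed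

lemma C11_le_log_of_col_counts:
  fixes a :: "nat \<Rightarrow> int"
  assumes "lam \<in> Lambda m n W" "0 < m" "support_col_counts_ge m n a lam" "\<forall>j<n. 0 \<le> a j"
  shows "C11 m n lam
    \<le> log 2 (real_of_int (min (int m + int (card {j\<in>{..<n}. a j \<noteq> 0}) - (\<Sum>j<n. a j)) (int n)))"
proof (rule C11_le_log_of_drank_le[OF assms(1,2)], intro allI impI)
  fix D assume "0 < lam D"
  then have D: "D \<in> det_channels m n" using assms(1) by (auto simp: Lambda_def)
  have a: "\<forall>j<n. 0 \<le> a j \<and> a j \<le> int (col_count m D j)"
    using assms(3,4) \<open>0 < lam D\<close> by (simp add: support_col_counts_ge_def)
  have "int (drank m D) \<le> int m + int (card {j\<in>{..<n}. a j \<noteq> 0}) - (\<Sum>j<n. a j)"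
    using drank_le_of_col_counts[OF a] .
  moreover have "int (drank m D) \<le> int n" using drank_le_n[OF D] by simp
  ultimately have "int (drank m D)
      \<le> min (int m + int (card {j\<in>{..<n}. a j \<noteq> 0}) - (\<Sum>j<n. a j)) (int n)" by simp
  then show "real (drank m D)
      \<le> real_of_int (min (int m + int (card {j\<in>{..<n}. a j \<noteq> 0}) - (\<Sum>j<n. a j)) (int n))"
    by linarith
qed

section \<open>Splitting off the constant rows\<close>

definition with_constant_part ::
    "nat \<Rightarrow> nat \<Rightarrow> (nat \<Rightarrow> real) \<Rightarrow> ((nat \<Rightarrow> nat) \<Rightarrow> real) \<Rightarrow> (nat \<Rightarrow> nat) \<Rightarrow> real" where
  "with_constant_part m n \<alpha> lam D =
     (\<Sum>j<n. \<alpha> j * of_bool (D = U_chan m j)) + (1 - (\<Sum>j<n. \<alpha> j)) * lam D"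

lemma sum_det_matrix_U_chan:
  assumes "x < m" "y < n"
  shows "(\<Sum>j<n. \<alpha> j * det_matrix (U_chan m j) x y) = \<alpha> y"
  using assms by (simp add: det_matrix_U_chan of_bool_def if_distrib cong: if_cong)

lemma sum_with_constant_part:
  "(\<Sum>D\<in>det_channels m n. with_constant_part m n \<alpha> lam D * g D)
     = (\<Sum>j<n. \<alpha> j * g (U_chan m j)) + (1 - (\<Sum>j<n. \<alpha> j)) * (\<Sum>D\<in>det_channels m n. lam D * g D)"
proof -
  have "(\<Sum>D\<in>det_channels m n. (\<Sum>j<n. \<alpha> j * of_bool (D = U_chan m j)) * g D)
      = (\<Sum>D\<in>det_channels m n. \<Sum>j<n. if D = U_chan m j then \<alpha> j * g D else 0)"
    unfolding sum_distrib_right by (intro sum.cong) auto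
  also have "\<dots> = (\<Sum>j<n. \<Sum>D\<in>det_channels m n. if D = U_chan m j then \<alpha> j * g D else 0)"
    by (rule sum.swap)
  also have "\<dots> = (\<Sum>j<n. \<alpha> j * g (U_chan m j))"
    by (rule sum.cong) (simp_all add: U_chan_in_det_channels)
  finally show ?thesis
    by (simp add: with_constant_part_def distrib_right sum.distrib sum_distrib_left mult.assoc)
qed

lemma Lambda_with_constant_part:
  assumes "\<forall>j<n. 0 \<le> \<alpha> j" "(\<Sum>j<n. \<alpha> j) \<le> 1" "lam \<in> Lambda m n X"
    and "\<forall>x<m. \<forall>y<n. W x y = \<alpha> y + (1 - (\<Sum>j<n. \<alpha> j)) * X x y"
  shows "with_constant_part m n \<alpha> lam \<in> Lambda m n W"
  unfolding Lambda_def
proof (intro CollectI conjI allI ballI impI)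
  fix D assume "D \<notin> det_channels m n"
  moreover have "D \<noteq> U_chan m j" if "j < n" for j
    using U_chan_in_det_channels[OF that] \<open>D \<notin> det_channels m n\<close> by auto
  ultimately show "with_constant_part m n \<alpha> lam D = 0"
    using assms(3) by (simp add: with_constant_part_def Lambda_def)
next
  fix D
  show "0 \<le> with_constant_part m n \<alpha> lam D"
    unfolding with_constant_part_def
    using assms(1,2) Lambda_nonneg[OF assms(3), of D] by (intro add_nonneg_nonneg sum_nonneg) auto
next
  show "(\<Sum>D\<in>det_channels m n. with_constant_part m n \<alpha> lam D) = 1"
    using sum_with_constant_part[of m n \<alpha> lam "\<lambda>_. 1"] assms(3) by (simp add: Lambda_def)
next
  fix x y assume "x < m" "y < n"
  have "(\<Sum>j<n. \<alpha> j * det_matrix (U_chan m j) x y) = \<alpha> y"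
    using \<open>x < m\<close> \<open>y < n\<close> by (rule sum_det_matrix_U_chan)
  then show "W x y = (\<Sum>D\<in>det_channels m n. with_constant_part m n \<alpha> lam D * det_matrix D x y)"
    using sum_with_constant_part[of m n \<alpha> lam "\<lambda>D. det_matrix D x y"] assms(3,4) \<open>x < m\<close> \<open>y < n\<close>
    by (simp add: Lambda_def)
qed

lemma C11_with_constant_part:
  assumes "0 < m"
  shows "C11 m n (with_constant_part m n \<alpha> lam) = (1 - (\<Sum>j<n. \<alpha> j)) * C11 m n lam"
  using sum_with_constant_part[of m n \<alpha> lam "\<lambda>D. log 2 (real (drank m D))"]
  by (simp add: C11_def drank_U_chan[OF assms])

lemma P_lam_1_with_constant_part_ge:
  assumes "0 < m" "\<forall>j<n. 0 \<le> \<alpha> j" "(\<Sum>j<n. \<alpha> j) \<le> 1" "lam \<in> Lambda m n X"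
  shows "(\<Sum>j<n. \<alpha> j) \<le> P_lam m n (with_constant_part m n \<alpha> lam) 1"
  unfolding P_lam_1_eq[OF assms(1)]
proof (rule sum_mono)
  fix j assume "j \<in> {..<n}"
  then have "(\<Sum>k<n. \<alpha> k * of_bool (U_chan m j = U_chan m k)) = \<alpha> j"
    by (simp add: U_chan_eq_iff[OF assms(1)] of_bool_def if_distrib cong: if_cong)
  moreover have "0 \<le> (1 - (\<Sum>k<n. \<alpha> k)) * lam (U_chan m j)"
    using assms(3) Lambda_nonneg[OF assms(4)] by simp
  ultimately show "\<alpha> j \<le> with_constant_part m n \<alpha> lam (U_chan m j)"
    by (simp add: with_constant_part_def)
qed

lemma C11_nonneg:
  assumes "lam \<in> Lambda m n W" "0 < m"
  shows "0 \<le> C11 m n lam"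
  unfolding C11_def
  using Lambda_nonneg[OF assms(1)] drank_pos[OF assms(2)]
  by (intro sum_nonneg mult_nonneg_nonneg) (simp_all add: Suc_le_eq)

lemma lower_C11_le_C11:
  assumes "lam \<in> Lambda m n W" "0 < m"
  shows "lower_C11 m n W \<le> C11 m n lam"
  unfolding lower_C11_def
proof (rule cInf_lower)
  show "C11 m n lam \<in> C11 m n ` Lambda m n W" using assms(1) by blast
  show "bdd_below (C11 m n ` Lambda m n W)"
    using C11_nonneg[OF _ assms(2)] by (auto intro: bdd_belowI[of _ 0])
qed

definition residual :: "nat \<Rightarrow> nat \<Rightarrow> (nat \<Rightarrow> nat \<Rightarrow> real) \<Rightarrow> nat \<Rightarrow> nat \<Rightarrow> real" where
  "residual m n W x y = (W x y - col_min m W y) / (1 - (\<Sum>j<n. col_min m W j))"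

lemma channel_residual:
  assumes "channel m n W" "0 < m" "(\<Sum>j<n. col_min m W j) < 1"
  shows "channel m n (residual m n W)"
  unfolding channel_def
proof (intro conjI allI impI)
  fix x y assume "x < m" "y < n"
  then show "0 \<le> residual m n W x y"
    using assms(3) col_min_le[of x m W y] by (simp add: residual_def)
next
  fix x assume "x < m"
  then have "(\<Sum>y<n. W x y - col_min m W y) = 1 - (\<Sum>j<n. col_min m W j)"
    using assms(1) by (simp add: channel_def sum_subtractf)
  then show "(\<Sum>y<n. residual m n W x y) = 1"
    using assms(3) by (simp add: residual_def flip: sum_divide_distrib)
qed

lemma channel_eq_col_min:
  assumes "channel m n W" "(\<Sum>j<n. col_min m W j) = 1" "x < m" "y < n"
  shows "W x y = col_min m W y"
proof -
  have "(\<Sum>y<n. W x y - col_min m W y) = 0"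
    using assms by (simp add: channel_def sum_subtractf)
  moreover have "\<forall>y\<in>{..<n}. 0 \<le> W x y - col_min m W y" using assms(3) col_min_le by simp
  ultimately have "\<forall>y\<in>{..<n}. W x y - col_min m W y = 0" by (subst (asm) sum_nonneg_eq_0_iff) auto
  then show ?thesis using assms(4) by simp
qed

text \<open>When the column minima sum to \<open>1\<close>, all rows of \<open>W\<close> equal them and any \<open>X\<close> will do.\<close>

lemma exists_decomposition_with_constant_part:
  assumes "channel m n W" "0 < m" "0 < n"
  obtains X lam where "lam \<in> Lambda m n X"
    "\<forall>x<m. \<forall>y<n. W x y = col_min m W y + (1 - (\<Sum>j<n. col_min m W j)) * X x y"
proof (cases "(\<Sum>j<n. col_min m W j) < 1")
  case True
  have "col_bounded m n (\<lambda>_. 0) (residual m n W)"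
    using channel_residual[OF assms(1,2) True]
    by (auto simp: col_bounded_def channel_def intro: sum_nonneg)
  then obtain lam where "lam \<in> Lambda m n (residual m n W)"
    using col_bounded_decomposition by blast
  moreover have "\<forall>x<m. \<forall>y<n. W x y = col_min m W y + (1 - (\<Sum>j<n. col_min m W j)) * residual m n W x y"
    using True by (simp add: residual_def)
  ultimately show ?thesis using that by blast
next
  case False
  then have "(\<Sum>j<n. col_min m W j) = 1" using sum_col_min_le_1[OF assms(1,2)] by simp
  then have "\<forall>x<m. \<forall>y<n. W x y = col_min m W y + (1 - (\<Sum>j<n. col_min m W j)) * det_matrix (U_chan m 0) x y"
    using channel_eq_col_min[OF assms(1)] by simp
  moreover have "(\<lambda>D. of_bool (D = U_chan m 0)) \<in> Lambda m n (det_matrix (U_chan m 0))"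
    using assms(3) by (intro Lambda_point_mass U_chan_in_det_channels) auto
  ultimately show ?thesis using that by blast
qed

lemma exists_Lambda_P_lam_1_eq_sum_col_min:
  assumes "channel m n W" "0 < m" "0 < n"
  obtains lam where "lam \<in> Lambda m n W" "P_lam m n lam 1 = (\<Sum>j<n. col_min m W j)"
proof -
  obtain X lam0 where lam0: "lam0 \<in> Lambda m n X"
    "\<forall>x<m. \<forall>y<n. W x y = col_min m W y + (1 - (\<Sum>j<n. col_min m W j)) * X x y"
    using exists_decomposition_with_constant_part[OF assms] .
  have \<alpha>: "\<forall>j<n. 0 \<le> col_min m W j" "(\<Sum>j<n. col_min m W j) \<le> 1"
    using col_min_nonneg[OF assms(1,2)] sum_col_min_le_1[OF assms(1,2)] by auto
  define lam where "lam = with_constant_part m n (col_min m W) lam0"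
  have "lam \<in> Lambda m n W" unfolding lam_def by (rule Lambda_with_constant_part[OF \<alpha> lam0])
  moreover have "(\<Sum>j<n. col_min m W j) \<le> P_lam m n lam 1"
    unfolding lam_def by (rule P_lam_1_with_constant_part_ge[OF assms(2) \<alpha> lam0(1)])
  ultimately show ?thesis
    using that P_lam_1_le_sum_col_min[OF _ assms(2)] by (meson order.antisym)
qed

lemma upper_P_1_eq_sum_col_min:
  assumes "channel m n W" "0 < m" "0 < n"
  shows "upper_P m n W 1 = (\<Sum>j<n. col_min m W j)"
  unfolding upper_P_def
proof (rule cSup_eq_maximum)
  obtain lam where "lam \<in> Lambda m n W" "P_lam m n lam 1 = (\<Sum>j<n. col_min m W j)"
    using exists_Lambda_P_lam_1_eq_sum_col_min[OF assms] .
  then show "(\<Sum>j<n. col_min m W j) \<in> (\<lambda>lam. P_lam m n lam 1) ` Lambda m n W" by force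
qed (use P_lam_1_le_sum_col_min[OF _ assms(2)] in auto)

lemma lower_C11_ge_one_minus_sum_col_min:
  assumes "channel m n W" "0 < m" "0 < n"
  shows "1 - (\<Sum>j<n. col_min m W j) \<le> lower_C11 m n W"
  unfolding lower_C11_def
proof (rule cInf_greatest)
  obtain lam where "lam \<in> Lambda m n W"
    using exists_Lambda_P_lam_1_eq_sum_col_min[OF assms] .
  then show "C11 m n ` Lambda m n W \<noteq> {}" by blast
next
  fix c assume "c \<in> C11 m n ` Lambda m n W"
  then obtain lam where "lam \<in> Lambda m n W" "c = C11 m n lam" by blast
  then show "1 - (\<Sum>j<n. col_min m W j) \<le> c"
    using C11_ge_one_minus_P_lam_1[OF _ assms(2)] P_lam_1_le_sum_col_min[OF _ assms(2)]
    by fastforce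
qed

lemma lower_C11_le_zero:
  assumes "channel m n W" "0 < m" "0 < n" "(\<Sum>j<n. col_min m W j) = 1"
  shows "lower_C11 m n W \<le> 0"
proof -
  obtain X lam0 where lam0: "lam0 \<in> Lambda m n X"
    "\<forall>x<m. \<forall>y<n. W x y = col_min m W y + (1 - (\<Sum>j<n. col_min m W j)) * X x y"
    using exists_decomposition_with_constant_part[OF assms(1-3)] .
  have "with_constant_part m n (col_min m W) lam0 \<in> Lambda m n W"
    using Lambda_with_constant_part[OF _ _ lam0] col_min_nonneg[OF assms(1,2)] assms(4) by simp
  from lower_C11_le_C11[OF this assms(2)] show ?thesis
    by (simp add: C11_with_constant_part[OF assms(2)] assms(4))
qed

lemma lower_C11_le_residual_bound:
  assumes "channel m n W" "0 < m" "(\<Sum>j<n. col_min m W j) < 1"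
  defines "a \<equiv> \<lambda>j. \<lfloor>\<Sum>x<m. residual m n W x j\<rfloor>"
  shows "lower_C11 m n W \<le> (1 - (\<Sum>j<n. col_min m W j))
    * log 2 (real_of_int (min (int m + int (card {j\<in>{..<n}. a j \<noteq> 0}) - (\<Sum>j<n. a j)) (int n)))"
proof -
  have residual: "channel m n (residual m n W)" using channel_residual[OF assms(1-3)] .
  then have "col_bounded m n a (residual m n W)" by (simp add: col_bounded_def a_def)
  then obtain lam0 where lam0: "lam0 \<in> Lambda m n (residual m n W)" "support_col_counts_ge m n a lam0"
    using col_bounded_decomposition by blast
  have a_nonneg: "\<forall>j<n. 0 \<le> a j"
    using residual by (auto simp: a_def channel_def intro: sum_nonneg)
  have "with_constant_part m n (col_min m W) lam0 \<in> Lambda m n W"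
    using Lambda_with_constant_part[OF _ _ lam0(1)] col_min_nonneg[OF assms(1,2)] assms(3)
    by (simp add: residual_def)
  from lower_C11_le_C11[OF this assms(2)]
  have "lower_C11 m n W \<le> (1 - (\<Sum>j<n. col_min m W j)) * C11 m n lam0"
    by (simp add: C11_with_constant_part[OF assms(2)])
  also have "\<dots> \<le> (1 - (\<Sum>j<n. col_min m W j))
    * log 2 (real_of_int (min (int m + int (card {j\<in>{..<n}. a j \<noteq> 0}) - (\<Sum>j<n. a j)) (int n)))"
    using C11_le_log_of_col_counts[OF lam0(1) assms(2) lam0(2) a_nonneg] assms(3)
    by (intro mult_left_mono) simp_all
  finally show ?thesis .
qed

lemma lower_C11_eq_if_two_inputs_or_outputs:
  assumes "channel m n W" "0 < m" "0 < n" "m \<le> 2 \<or> n \<le> 2"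
  shows "lower_C11 m n W = 1 - (\<Sum>j<n. col_min m W j)"
proof (rule order.antisym)
  obtain lam where "lam \<in> Lambda m n W" "P_lam m n lam 1 = (\<Sum>j<n. col_min m W j)"
    using exists_Lambda_P_lam_1_eq_sum_col_min[OF assms(1-3)] .
  then show "lower_C11 m n W \<le> 1 - (\<Sum>j<n. col_min m W j)"
    using lower_C11_le_C11[OF _ assms(2)] C11_eq_one_minus_P_lam_1[OF _ assms(2,4)] by metis
qed (rule lower_C11_ge_one_minus_sum_col_min[OF assms(1-3)])

theorem theorem1:
  fixes m n :: nat and W :: "nat \<Rightarrow> nat \<Rightarrow> real"
  assumes "m \<ge> 2" and "n \<ge> 2" and "channel m n W"
  defines "\<alpha> \<equiv> (\<lambda>j. Min ((\<lambda>i. W i j) ` {..<m}))"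
  defines "P1 \<equiv> upper_P m n W 1"
  defines "W' \<equiv> (\<lambda>x y. (W x y - (\<Sum>j<n. \<alpha> j * det_matrix (U_chan m j) x y)) / (1 - P1))"
  defines "a \<equiv> (\<lambda>j. \<lfloor>\<Sum>x<m. W' x j\<rfloor>)"
  defines "\<gamma> \<equiv> min (int m + int (card {j\<in>{..<n}. a j \<noteq> 0}) - (\<Sum>j<n. a j)) (int n)"
  shows "P1 = (\<Sum>j<n. \<alpha> j)
    \<and> lower_C11 m n W \<ge> 1 - P1
    \<and> (P1 = 1 \<longrightarrow> lower_C11 m n W \<le> 0)
    \<and> (P1 < 1 \<longrightarrow> lower_C11 m n W \<le> (1 - P1) * log 2 (real_of_int \<gamma>))
    \<and> ((m = 2 \<or> n = 2) \<longrightarrow> lower_C11 m n W = 1 - P1)"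
proof -
  have m: "0 < m" and n: "0 < n" using assms(1,2) by simp_all
  have \<alpha>_eq: "\<alpha> = col_min m W" by (simp add: \<alpha>_def col_min_def fun_eq_iff)
  have P1: "P1 = (\<Sum>j<n. col_min m W j)"
    unfolding P1_def by (rule upper_P_1_eq_sum_col_min[OF assms(3) m n])
  define r where "r j = \<lfloor>\<Sum>x<m. residual m n W x j\<rfloor>" for j
  have "W' x y = residual m n W x y" if "x < m" "y < n" for x y
    using that by (simp add: W'_def residual_def P1 \<alpha>_eq sum_det_matrix_U_chan)
  then have "a j = r j" if "j < n" for j
    using that by (simp add: a_def r_def)
  then have "{j\<in>{..<n}. a j \<noteq> 0} = {j\<in>{..<n}. r j \<noteq> 0}" "(\<Sum>j<n. a j) = (\<Sum>j<n. r j)" by auto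
  then have \<gamma>: "\<gamma> = min (int m + int (card {j\<in>{..<n}. r j \<noteq> 0}) - (\<Sum>j<n. r j)) (int n)"
    by (simp add: \<gamma>_def)
  show ?thesis
    unfolding P1 \<alpha>_eq
  proof (intro conjI impI)
    show "1 - (\<Sum>j<n. col_min m W j) \<le> lower_C11 m n W"
      by (rule lower_C11_ge_one_minus_sum_col_min[OF assms(3) m n])
  next
    assume "(\<Sum>j<n. col_min m W j) = 1"
    then show "lower_C11 m n W \<le> 0" by (rule lower_C11_le_zero[OF assms(3) m n])
  next
    assume "(\<Sum>j<n. col_min m W j) < 1"
    then show "lower_C11 m n W \<le> (1 - (\<Sum>j<n. col_min m W j)) * log 2 (real_of_int \<gamma>)"
      unfolding \<gamma> r_def by (rule lower_C11_le_residual_bound[OF assms(3) m])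
  next
    assume "m = 2 \<or> n = 2"
    then show "lower_C11 m n W = 1 - (\<Sum>j<n. col_min m W j)"
      by (intro lower_C11_eq_if_two_inputs_or_outputs[OF assms(3) m n]) auto
  qed simp
qed

end
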